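(* Let $X_1,\ldots,X_d$ be $d$ disjoint sets and let $a_1,\ldots,a_d,b_1,\ldots,b_d$ be nonnegative integers. Suppose $A_1,\ldots,A_h$ and $B_1,\ldots,B_h$ are two families of subsets of $X_1\cup\cdots\cup X_d$ that satisfy: (1) $A_i\cap B_i=\emptyset$ for every $1\le i\le h$; (2) $A_i\cap B_j\neq\emptyset$ for every $1\le i<j\le h$; (3) for every $1\le i\le h$ and $1\le j\le d$ we have $|B_i\cap X_j|\le b_j$; (4) for every $1\le i\le h$ there is a permutation $\pi:[d]\to[d]$ such that for every $1\le j\le d$ we have $|A_i\cap X_j|\le a_{\pi(j)}$. Then $h\le Q(a_1,\ldots,a_d,b_1,\ldots,b_d)$, where $Q(a_1,\ldots,a_d,b_1,\ldots,b_d)$ is defined as follows: put $a:=\max_i a_i$, take disjoint sets $U_1,\ldots,U_d$ with $|U_i|=a+b_i$, identifying each $U_i$ with $[a+b_i]=\{1,\ldots,a+b_i\}$; then $Q(a_1,\ldots,a_d,b_1,\ldots,b_d)$ is the number of sets $S\subseteq U_1\cup\cdots\cup U_d$ for which there is a permutation $\pi:[d]\to[d]$ such that, for every $i$, $S\cap U_i$ is a subset of $[a_{\pi(i)}+b_i]$ of size $b_i$. Moreover, this bound is best possible for every choice of $a_1,\ldots,a_d$ and $b_1,\ldots,b_d$.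
   Context: $[n]$ denotes $\{1,\ldots,n\}$. This is a multi-partite variant of Bollobás's Two Families Theorem; it differs from Alon's multi-partite Two Families Theorem (which gives $h\le\prod_{j=1}^d\binom{a_j+b_j}{b_j}$) in that the permutation $\pi$ in condition (4) may depend on $i$ rather than being the identity. *)

theory Defs
  imports "HOL-Combinatorics.Permutations"
begin

definition multi_two_families ::
  "nat \<Rightarrow> (nat \<Rightarrow> nat) \<Rightarrow> (nat \<Rightarrow> nat) \<Rightarrow> (nat \<Rightarrow> 'a set) \<Rightarrow> nat
    \<Rightarrow> (nat \<Rightarrow> 'a set) \<Rightarrow> (nat \<Rightarrow> 'a set) \<Rightarrow> bool" where
  "multi_two_families d a b X h A B \<longleftrightarrow>
     (\<forall>j\<in>{1..d}. \<forall>k\<in>{1..d}. j \<noteq> k \<longrightarrow> X j \<inter> X k = {}) \<and>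
     (\<forall>i\<in>{1..h}. A i \<subseteq> (\<Union>j\<in>{1..d}. X j) \<and> B i \<subseteq> (\<Union>j\<in>{1..d}. X j)) \<and>
     (\<forall>i\<in>{1..h}. A i \<inter> B i = {}) \<and>
     (\<forall>i j. 1 \<le> i \<and> i < j \<and> j \<le> h \<longrightarrow> A i \<inter> B j \<noteq> {}) \<and>
     (\<forall>i\<in>{1..h}. \<forall>j\<in>{1..d}. finite (B i \<inter> X j) \<and> card (B i \<inter> X j) \<le> b j) \<and>
     (\<forall>i\<in>{1..h}. \<exists>\<pi>. \<pi> permutes {1..d} \<and>
        (\<forall>j\<in>{1..d}. finite (A i \<inter> X j) \<and> card (A i \<inter> X j) \<le> a (\<pi> j)))"

text \<open>The disjoint union U_1 \<union> ... \<union> U_d is modelled as the set of pairs (i,k)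
  with i \<in> {1..d}, k \<in> {1..amax+b i}; S \<inter> U_i corresponds to {k. (i,k) \<in> S}.\<close>

definition amax :: "nat \<Rightarrow> (nat \<Rightarrow> nat) \<Rightarrow> nat" where
  "amax d a = Max (a ` {1..d})"

definition Ucal :: "nat \<Rightarrow> (nat \<Rightarrow> nat) \<Rightarrow> (nat \<Rightarrow> nat) \<Rightarrow> (nat \<times> nat) set" where
  "Ucal d a b = {(i, k). i \<in> {1..d} \<and> k \<in> {1..amax d a + b i}}"

definition Qbound :: "nat \<Rightarrow> (nat \<Rightarrow> nat) \<Rightarrow> (nat \<Rightarrow> nat) \<Rightarrow> nat" where
  "Qbound d a b = card {S. S \<subseteq> Ucal d a b \<and>
     (\<exists>\<pi>. \<pi> permutes {1..d} \<and>
        (\<forall>i\<in>{1..d}. {k. (i, k) \<in> S} \<subseteq> {1..a (\<pi> i) + b i} \<and>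
                     card {k. (i, k) \<in> S} = b i))}"

end

theory Submission
  imports Defs "HOL-Library.Function_Algebras" "HOL-Library.Countable_Set"
    "HOL-Computational_Algebra.Polynomial"
begin

(* Upper bound, by the polynomial method. Label the ground elements by distinct nonzero reals. To
   A_i attach the product F_i of the linear forms sum_m label(x)^m y_(j,m) over x in A_i \<inter> X_j,
   padded with copies of y_(j,0) so that F_i has degree max a in every block j; to B_k attach the
   point whose block j lists the coefficients of the product of (Z - label x) over x in B_k \<inter> X_j.
   Then F_i vanishes at the point of B_k iff A_i meets B_k, so the F_i form a triangular, hence
   linearly independent, family. Each monomial of F_i has degree max a in block j, at least
   max a - a_pi(j) of it coming from y_(j,0); by stars and bars these exponent vectors inject into
   the sets counted by Q.

   Sharpness: let the B_i run through the sets S counted by Q in order of decreasing total weight,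
   and let A_i be the complement of B_i in the blocks [a_pi(j) + b_j]. If A_i misses B_k, then B_k
   only adds elements lying above B_i in each block, so B_k is heavier and k < i. *)

section \<open>Triangular families of functions\<close>

definition scale_fun :: "'k::times \<Rightarrow> ('x \<Rightarrow> 'k) \<Rightarrow> 'x \<Rightarrow> 'k" where
  "scale_fun c f = (\<lambda>x. c * f x)"

interpretation fun_space: vector_space "scale_fun :: 'k::field \<Rightarrow> ('x \<Rightarrow> 'k) \<Rightarrow> 'x \<Rightarrow> 'k"
  by unfold_locales (auto simp: scale_fun_def fun_eq_iff algebra_simps)

lemma sum_fun_apply: "(\<Sum>v\<in>S. g v) y = (\<Sum>v\<in>S. g v y)"
  by (induction S rule: infinite_finite_induct) auto

lemma triangular_inj_on:
  assumes diag: "\<And>i. i \<in> I \<Longrightarrow> F i (P i) \<noteq> 0"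
    and upper: "\<And>i k. i \<in> I \<Longrightarrow> k \<in> I \<Longrightarrow> i < k \<Longrightarrow> F i (P k) = 0"
  shows "inj_on F (I :: 'i::linorder set)"
proof (rule inj_onI)
  fix i k assume "i \<in> I" "k \<in> I" "F i = F k"
  then show "i = k"
    using upper[of i k] upper[of k i] diag[of i] diag[of k] by (cases i k rule: linorder_cases) auto
qed

lemma triangular_independent:
  fixes F :: "'i::linorder \<Rightarrow> 'x \<Rightarrow> 'k::field"
  assumes "finite I"
    and diag: "\<And>i. i \<in> I \<Longrightarrow> F i (P i) \<noteq> 0"
    and upper: "\<And>i k. i \<in> I \<Longrightarrow> k \<in> I \<Longrightarrow> i < k \<Longrightarrow> F i (P k) = 0"
  shows "fun_space.independent (F ` I)"
proof (rule fun_space.independent_if_scalars_zero)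
  show "finite (F ` I)" using \<open>finite I\<close> by simp
  have inj: "inj_on F I" using diag upper by (rule triangular_inj_on)
  fix u v assume comb: "(\<Sum>w\<in>F ` I. scale_fun (u w) w) = 0" and "v \<in> F ` I"
  show "u v = 0"
  proof (rule ccontr)
    assume "u v \<noteq> 0"
    define J where "J = {i\<in>I. u (F i) \<noteq> 0}"
    have "J \<noteq> {}" "finite J" using \<open>u v \<noteq> 0\<close> \<open>v \<in> F ` I\<close> \<open>finite I\<close> by (auto simp: J_def)
    define i0 where "i0 = Max J"
    have i0: "i0 \<in> I" "u (F i0) \<noteq> 0"
      using Max_in[OF \<open>finite J\<close> \<open>J \<noteq> {}\<close>] by (auto simp: i0_def J_def)
    have vanish: "u (F i) * F i (P i0) = 0" if "i \<in> I - {i0}" for i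
    proof (cases "i < i0")
      case True then show ?thesis using upper[of i i0] that i0 by simp
    next
      case False
      then have "i \<notin> J" using that Max_ge[OF \<open>finite J\<close>, of i] by (auto simp: i0_def)
      then show ?thesis using that by (simp add: J_def)
    qed
    \<comment> \<open>evaluating the vanishing combination at the point of its largest index\<close>
    have "0 = (\<Sum>i\<in>I. u (F i) * F i (P i0))"
      using arg_cong[OF comb, of "\<lambda>f. f (P i0)"]
      by (simp add: sum_fun_apply scale_fun_def sum.reindex[OF inj])
    also have "\<dots> = u (F i0) * F i0 (P i0)"
      using i0 \<open>finite I\<close> by (simp add: sum.remove sum.neutral vanish)
    finally show False using i0 diag[of i0] by simp
  qed
qed

lemma card_le_card_span_if_triangular:
  fixes F :: "'i::linorder \<Rightarrow> 'x \<Rightarrow> 'k::field"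
  assumes "finite I" "finite M" "F ` I \<subseteq> fun_space.span M"
    and diag: "\<And>i. i \<in> I \<Longrightarrow> F i (P i) \<noteq> 0"
    and upper: "\<And>i k. i \<in> I \<Longrightarrow> k \<in> I \<Longrightarrow> i < k \<Longrightarrow> F i (P k) = 0"
  shows "card I \<le> card M"
proof -
  have "fun_space.independent (F ` I)"
    using \<open>finite I\<close> diag upper by (rule triangular_independent)
  then have "card (F ` I) \<le> card M"
    using fun_space.independent_span_bound \<open>finite M\<close> \<open>F ` I \<subseteq> fun_space.span M\<close> by blast
  moreover have "inj_on F I" using diag upper by (rule triangular_inj_on)
  ultimately show ?thesis by (simp add: card_image)
qed

section \<open>Products of linear forms\<close>

definition monomial :: "'v set \<Rightarrow> ('v \<Rightarrow> nat) \<Rightarrow> ('v \<Rightarrow> 'k) \<Rightarrow> 'k::comm_monoid_mult" where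
  "monomial V e y = (\<Prod>v\<in>V. y v ^ e v)"

definition choice_exponent :: "'q set \<Rightarrow> ('q \<Rightarrow> 'j) \<Rightarrow> ('q \<Rightarrow> nat) \<Rightarrow> 'j \<times> nat \<Rightarrow> nat" where
  "choice_exponent Q \<beta> g v = card {q\<in>Q. (\<beta> q, g q) = v}"

lemma prod_linear_forms_expand:
  fixes c :: "'q \<Rightarrow> nat \<Rightarrow> 'k::comm_semiring_1" and \<beta> :: "'q \<Rightarrow> 'j"
  assumes "finite Q" "finite V"
    and vars: "\<And>q m. q \<in> Q \<Longrightarrow> m \<le> n (\<beta> q) \<Longrightarrow> (\<beta> q, m) \<in> V"
  shows "(\<lambda>y. \<Prod>q\<in>Q. \<Sum>m\<in>{0..n (\<beta> q)}. c q m * y (\<beta> q, m))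
     = (\<Sum>g\<in>Pi\<^sub>E Q (\<lambda>q. {0..n (\<beta> q)}).
          scale_fun (\<Prod>q\<in>Q. c q (g q)) (monomial V (choice_exponent Q \<beta> g)))"
proof
  fix y :: "'j \<times> nat \<Rightarrow> 'k"
  have monom: "(\<Prod>q\<in>Q. y (\<beta> q, g q)) = monomial V (choice_exponent Q \<beta> g) y"
    if "g \<in> Pi\<^sub>E Q (\<lambda>q. {0..n (\<beta> q)})" for g
  proof -
    have "(\<Prod>q\<in>Q. y (\<beta> q, g q)) = (\<Prod>v\<in>V. \<Prod>q\<in>{q\<in>Q. (\<beta> q, g q) = v}. y (\<beta> q, g q))"
      by (rule prod.group[symmetric]) (use assms that in \<open>auto simp: PiE_iff\<close>)
    also have "\<dots> = monomial V (choice_exponent Q \<beta> g) y"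
      unfolding monomial_def choice_exponent_def by (rule prod.cong) auto
    finally show ?thesis .
  qed
  have "(\<Prod>q\<in>Q. \<Sum>m\<in>{0..n (\<beta> q)}. c q m * y (\<beta> q, m))
      = (\<Sum>g\<in>Pi\<^sub>E Q (\<lambda>q. {0..n (\<beta> q)}). \<Prod>q\<in>Q. c q (g q) * y (\<beta> q, g q))"
    using \<open>finite Q\<close> by (rule prod_sum_PiE) simp
  also have "\<dots> = (\<Sum>g\<in>Pi\<^sub>E Q (\<lambda>q. {0..n (\<beta> q)}).
                   (\<Prod>q\<in>Q. c q (g q)) * monomial V (choice_exponent Q \<beta> g) y)"
    by (rule sum.cong) (simp_all add: prod.distrib monom)
  finally show "(\<Prod>q\<in>Q. \<Sum>m\<in>{0..n (\<beta> q)}. c q m * y (\<beta> q, m))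
      = (\<Sum>g\<in>Pi\<^sub>E Q (\<lambda>q. {0..n (\<beta> q)}).
          scale_fun (\<Prod>q\<in>Q. c q (g q)) (monomial V (choice_exponent Q \<beta> g))) y"
    by (simp add: sum_fun_apply scale_fun_def)
qed

lemma prod_linear_forms_in_span:
  fixes c :: "'q \<Rightarrow> nat \<Rightarrow> 'k::field"
  assumes "finite Q" "finite V"
    and vars: "\<And>q m. q \<in> Q \<Longrightarrow> m \<le> n (\<beta> q) \<Longrightarrow> (\<beta> q, m) \<in> V"
    and exponents: "\<And>g. g \<in> Pi\<^sub>E Q (\<lambda>q. {0..n (\<beta> q)}) \<Longrightarrow> (\<forall>q\<in>Q. c q (g q) \<noteq> 0)
                      \<Longrightarrow> choice_exponent Q \<beta> g \<in> E"
  shows "(\<lambda>y. \<Prod>q\<in>Q. \<Sum>m\<in>{0..n (\<beta> q)}. c q m * y (\<beta> q, m)) \<in> fun_space.span (monomial V ` E)"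
proof -
  have summands: "scale_fun (\<Prod>q\<in>Q. c q (g q)) (monomial V (choice_exponent Q \<beta> g))
          \<in> fun_space.span (monomial V ` E)" if g: "g \<in> Pi\<^sub>E Q (\<lambda>q. {0..n (\<beta> q)})" for g
  proof (cases "\<forall>q\<in>Q. c q (g q) \<noteq> 0")
    case True
    then show ?thesis using exponents[OF g] by (intro fun_space.span_scale fun_space.span_base) simp
  next
    case False
    then have "(\<Prod>q\<in>Q. c q (g q)) = 0" using \<open>finite Q\<close> by auto
    then show ?thesis using fun_space.span_zero by (simp add: scale_fun_def zero_fun_def)
  qed
  show ?thesis
    by (subst prod_linear_forms_expand[OF assms(1-3)]) (simp_all add: fun_space.span_sum summands)
qed

lemma sum_choice_exponent:
  assumes "finite Q" "g \<in> Pi\<^sub>E Q (\<lambda>q. {0..n (\<beta> q)})"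
  shows "(\<Sum>m\<in>{0..n j}. choice_exponent Q \<beta> g (j, m)) = card {q\<in>Q. \<beta> q = j}"
proof -
  have "(\<Sum>m\<in>{0..n j}. choice_exponent Q \<beta> g (j, m))
      = (\<Sum>m\<in>{0..n j}. \<Sum>q\<in>{q\<in>{q\<in>Q. \<beta> q = j}. g q = m}. 1)"
    unfolding choice_exponent_def by (intro sum.cong) (auto intro: arg_cong[where f = card])
  also have "\<dots> = (\<Sum>q\<in>{q\<in>Q. \<beta> q = j}. 1)"
    by (rule sum.group) (use assms in auto)
  finally show ?thesis by simp
qed

section \<open>Stars and bars\<close>

lemma strict_antimono_image_eq:
  fixes f g :: "nat \<Rightarrow> 'a::linorder"
  assumes f: "\<And>i j. i \<in> {1..n} \<Longrightarrow> j \<in> {1..n} \<Longrightarrow> i < j \<Longrightarrow> f j < f i"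
    and g: "\<And>i j. i \<in> {1..n} \<Longrightarrow> j \<in> {1..n} \<Longrightarrow> i < j \<Longrightarrow> g j < g i"
    and img: "f ` {1..n} = g ` {1..n}"
  shows "m \<in> {1..n} \<Longrightarrow> f m = g m"
proof (induction m rule: less_induct)
  case (less m)
  obtain m' where m': "m' \<in> {1..n}" "f m = g m'" using img less.prems by blast
  obtain m'' where m'': "m'' \<in> {1..n}" "g m = f m''" using img less.prems by (metis imageI imageE)
  have "\<not> m' < m"
    using less.IH[OF _ m'(1)] f[OF m'(1) less.prems] m'(2) by auto
  moreover have "\<not> m'' < m"
    using less.IH[OF _ m''(1)] g[OF m''(1) less.prems] m''(2) by auto
  ultimately show ?case
    using f[OF less.prems m''(1)] g[OF less.prems m'(1)] m' m''
    by (cases "m' = m"; cases "m'' = m") force+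
qed

text \<open>The vector \<open>w 0, \<dots>, w b\<close> is encoded by the word of \<open>w b\<close> stars, a bar, \<open>w (b - 1)\<close>
  stars, a bar, \<dots>, a bar, \<open>w 0\<close> stars; \<open>bar_pos w b m\<close> is the position of the \<open>m\<close>-th bar
  counted from the right, so all bars lie among the first \<open>b + w 1 + \<dots> + w b\<close> positions.\<close>

definition bar_pos :: "(nat \<Rightarrow> nat) \<Rightarrow> nat \<Rightarrow> nat \<Rightarrow> nat" where
  "bar_pos w b m = (b + 1 - m) + (\<Sum>m'\<in>{m..b}. w m')"

definition bars :: "(nat \<Rightarrow> nat) \<Rightarrow> nat \<Rightarrow> nat set" where
  "bars w b = bar_pos w b ` {1..b}"

lemma bar_pos_Suc: "m \<in> {1..b} \<Longrightarrow> bar_pos w b m = bar_pos w b (Suc m) + 1 + w m"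
  unfolding bar_pos_def by (simp add: sum.atLeast_Suc_atMost, linarith)

lemma bar_pos_strict_antimono:
  assumes "1 \<le> i" "i < j" "j \<le> Suc b"
  shows "bar_pos w b j < bar_pos w b i"
proof -
  have "(\<Sum>m\<in>{j..b}. w m) \<le> (\<Sum>m\<in>{i..b}. w m)"
    by (rule sum_mono2) (use assms in auto)
  then show ?thesis unfolding bar_pos_def using assms by simp
qed

lemma card_bars: "card (bars w b) = b"
proof -
  have "inj_on (bar_pos w b) {1..b}"
    by (rule inj_onI) (metis atLeastAtMost_iff bar_pos_strict_antimono le_SucI less_irrefl linorder_neqE_nat)
  then show ?thesis unfolding bars_def by (simp add: card_image)
qed

lemma bars_subset:
  assumes "(\<Sum>m\<in>{1..b}. w m) \<le> c"
  shows "bars w b \<subseteq> {1..c + b}"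
proof
  fix p assume "p \<in> bars w b"
  then obtain m where m: "m \<in> {1..b}" "p = bar_pos w b m" unfolding bars_def by auto
  have "bar_pos w b m \<le> bar_pos w b 1"
    using bar_pos_strict_antimono[of 1 m b w] m by (cases "m = 1") auto
  moreover have "bar_pos w b 1 = b + (\<Sum>m\<in>{1..b}. w m)" by (simp add: bar_pos_def)
  moreover have "1 \<le> bar_pos w b m" using m(1) by (simp add: bar_pos_def Suc_diff_le trans_le_add1)
  ultimately show "p \<in> {1..c + b}" using assms m by auto
qed

text \<open>The sum condition recovers \<open>w 0\<close>, which the bar positions do not see.\<close>

lemma bars_inj:
  assumes "(\<Sum>m\<in>{0..b}. w m) = (\<Sum>m\<in>{0..b}. w' m)" "bars w b = bars w' b" "m \<le> b"
  shows "w m = w' m"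
proof -
  have "bar_pos w b m = bar_pos w' b m" if "m \<in> {1..b}" for m
    using strict_antimono_image_eq[of b "bar_pos w b" "bar_pos w' b"] that assms(2)
    by (simp add: bars_def bar_pos_strict_antimono)
  moreover have "bar_pos w b (Suc b) = bar_pos w' b (Suc b)" by (simp add: bar_pos_def)
  ultimately have pos: "bar_pos w b m = bar_pos w' b m" if "m \<in> {1..Suc b}" for m
    using that by (cases "m = Suc b") auto
  have eq: "w m = w' m" if "m \<in> {1..b}" for m
    using bar_pos_Suc[OF that, of w] bar_pos_Suc[OF that, of w'] pos[of m] pos[of "Suc m"] that by auto
  show ?thesis
  proof (cases "m = 0")
    case True
    have "(\<Sum>m\<in>{1..b}. w m) = (\<Sum>m\<in>{1..b}. w' m)" using eq by (rule sum.cong[OF refl])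
    with assms(1) show ?thesis using True by (simp add: sum.atLeast_Suc_atMost)
  qed (use eq assms(3) in auto)
qed

section \<open>Exponent vectors and the sets counted by \<open>Q\<close>\<close>

abbreviation slice :: "(nat \<times> nat) set \<Rightarrow> nat \<Rightarrow> nat set" where
  "slice S j \<equiv> {k. (j, k) \<in> S}"

definition Qsets :: "nat \<Rightarrow> (nat \<Rightarrow> nat) \<Rightarrow> (nat \<Rightarrow> nat) \<Rightarrow> (nat \<times> nat) set set" where
  "Qsets d a b = {S. S \<subseteq> Ucal d a b \<and> (\<exists>\<pi>. \<pi> permutes {1..d} \<and>
     (\<forall>i\<in>{1..d}. slice S i \<subseteq> {1..a (\<pi> i) + b i} \<and> card (slice S i) = b i))}"

lemma Qbound_eq_card_Qsets: "Qbound d a b = card (Qsets d a b)"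
  unfolding Qbound_def Qsets_def ..

lemma finite_Ucal: "finite (Ucal d a b)"
proof -
  have "Ucal d a b = (SIGMA i:{1..d}. {1..amax d a + b i})" unfolding Ucal_def by auto
  then show ?thesis by simp
qed

lemma finite_Qsets: "finite (Qsets d a b)"
  by (rule finite_subset[of _ "Pow (Ucal d a b)"]) (auto simp: Qsets_def finite_Ucal)

lemma le_amax: "j \<in> {1..d} \<Longrightarrow> a j \<le> amax d a"
  unfolding amax_def by simp

text \<open>The exponent vectors of the monomials that can occur in the polynomials of the upper bound.\<close>

definition admissible_exponents :: "nat \<Rightarrow> (nat \<Rightarrow> nat) \<Rightarrow> (nat \<Rightarrow> nat) \<Rightarrow> (nat \<times> nat \<Rightarrow> nat) set" where
  "admissible_exponents d a b = {e. (\<forall>v. v \<notin> Sigma {1..d} (\<lambda>j. {0..b j}) \<longrightarrow> e v = 0) \<and>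
     (\<exists>\<pi>. \<pi> permutes {1..d} \<and> (\<forall>j\<in>{1..d}. (\<Sum>m\<in>{0..b j}. e (j, m)) = amax d a \<and>
           amax d a \<le> a (\<pi> j) + e (j, 0)))}"

definition exponent_code :: "nat \<Rightarrow> (nat \<Rightarrow> nat) \<Rightarrow> (nat \<times> nat \<Rightarrow> nat) \<Rightarrow> (nat \<times> nat) set" where
  "exponent_code d b e = {(j, k). j \<in> {1..d} \<and> k \<in> bars (\<lambda>m. e (j, m)) (b j)}"

lemma slice_exponent_code: "j \<in> {1..d} \<Longrightarrow> slice (exponent_code d b e) j = bars (\<lambda>m. e (j, m)) (b j)"
  unfolding exponent_code_def by auto

lemma exponent_code_inj: "inj_on (exponent_code d b) (admissible_exponents d a b)"
proof (rule inj_onI, rule ext)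
  fix e e' and v :: "nat \<times> nat" assume e: "e \<in> admissible_exponents d a b" and e': "e' \<in> admissible_exponents d a b"
    and code: "exponent_code d b e = exponent_code d b e'"
  obtain j m where v: "v = (j, m)" by fastforce
  show "e v = e' v"
  proof (cases "j \<in> {1..d} \<and> m \<le> b j")
    case True
    then have "bars (\<lambda>m. e (j, m)) (b j) = bars (\<lambda>m. e' (j, m)) (b j)"
      using code slice_exponent_code by metis
    moreover have "(\<Sum>m\<in>{0..b j}. e (j, m)) = (\<Sum>m\<in>{0..b j}. e' (j, m))"
      using e e' True by (auto simp: admissible_exponents_def)
    ultimately show ?thesis using bars_inj True v by metis
  next
    case False
    then show ?thesis using e e' v by (auto simp: admissible_exponents_def)
  qed
qed

lemma exponent_code_in_Qsets:
  assumes "e \<in> admissible_exponents d a b"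
  shows "exponent_code d b e \<in> Qsets d a b"
proof -
  obtain \<pi> where \<pi>: "\<pi> permutes {1..d}"
    and e: "\<And>j. j \<in> {1..d} \<Longrightarrow> (\<Sum>m\<in>{0..b j}. e (j, m)) = amax d a \<and> amax d a \<le> a (\<pi> j) + e (j, 0)"
    using assms unfolding admissible_exponents_def by blast
  have tail: "(\<Sum>m\<in>{1..b j}. e (j, m)) + e (j, 0) = amax d a" if "j \<in> {1..d}" for j
    using e[OF that] by (simp add: sum.atLeast_Suc_atMost add.commute)
  have "slice (exponent_code d b e) j \<subseteq> {1..amax d a + b j}" if "j \<in> {1..d}" for j
    using bars_subset[where w = "\<lambda>m. e (j, m)" and c = "amax d a"] tail[OF that] that
    by (simp add: slice_exponent_code)
  then have "exponent_code d b e \<subseteq> Ucal d a b"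
    unfolding Ucal_def by (auto simp: exponent_code_def subset_iff)
  moreover have "slice (exponent_code d b e) j \<subseteq> {1..a (\<pi> j) + b j}
      \<and> card (slice (exponent_code d b e) j) = b j" if "j \<in> {1..d}" for j
    using bars_subset[where w = "\<lambda>m. e (j, m)" and c = "a (\<pi> j)"] tail[OF that] e[OF that] that
    by (simp add: slice_exponent_code card_bars)
  ultimately show ?thesis unfolding Qsets_def using \<pi> by blast
qed

lemma card_admissible_exponents_le_Qbound:
  "finite (admissible_exponents d a b) \<and> card (admissible_exponents d a b) \<le> Qbound d a b"
proof -
  have "exponent_code d b ` admissible_exponents d a b \<subseteq> Qsets d a b"
    using exponent_code_in_Qsets by blast
  then show ?thesis
    using exponent_code_inj finite_Qsets
    by (metis Qbound_eq_card_Qsets card_inj_on_le finite_imageD finite_subset)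
qed

section \<open>The upper bound\<close>

lemma poly_eq_sum_coeff:
  fixes p :: "'a::comm_semiring_1 poly"
  assumes "degree p \<le> n"
  shows "poly p z = (\<Sum>m\<in>{0..n}. z ^ m * coeff p m)"
proof -
  have "poly p z = (\<Sum>m\<le>degree p. coeff p m * z ^ m)" by (rule poly_altdef)
  also have "\<dots> = (\<Sum>m\<le>n. coeff p m * z ^ m)"
    by (rule sum.mono_neutral_left) (use assms in \<open>auto simp: coeff_eq_0\<close>)
  finally show ?thesis by (simp add: atLeast0AtMost mult.commute)
qed

locale two_families =
  fixes d :: nat and a b :: "nat \<Rightarrow> nat" and X :: "nat \<Rightarrow> 'a set"
    and h :: nat and A B :: "nat \<Rightarrow> 'a set"
  assumes families: "multi_two_families d a b X h A B"
begin

lemma X_disjoint: "j \<in> {1..d} \<Longrightarrow> k \<in> {1..d} \<Longrightarrow> j \<noteq> k \<Longrightarrow> X j \<inter> X k = {}"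
  and A_subset: "i \<in> {1..h} \<Longrightarrow> A i \<subseteq> (\<Union>j\<in>{1..d}. X j)"
  and B_subset: "i \<in> {1..h} \<Longrightarrow> B i \<subseteq> (\<Union>j\<in>{1..d}. X j)"
  and A_B_disjoint: "i \<in> {1..h} \<Longrightarrow> A i \<inter> B i = {}"
  and A_B_cross: "1 \<le> i \<Longrightarrow> i < k \<Longrightarrow> k \<le> h \<Longrightarrow> A i \<inter> B k \<noteq> {}"
  and B_X: "i \<in> {1..h} \<Longrightarrow> j \<in> {1..d} \<Longrightarrow> finite (B i \<inter> X j) \<and> card (B i \<inter> X j) \<le> b j"
  and A_X: "i \<in> {1..h} \<Longrightarrow> \<exists>\<pi>. \<pi> permutes {1..d} \<and>
              (\<forall>j\<in>{1..d}. finite (A i \<inter> X j) \<and> card (A i \<inter> X j) \<le> a (\<pi> j))"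
  using families unfolding multi_two_families_def by blast+

definition block :: "'a \<Rightarrow> nat" where
  "block x = (SOME j. j \<in> {1..d} \<and> x \<in> X j)"

lemma block: "x \<in> (\<Union>j\<in>{1..d}. X j) \<Longrightarrow> block x \<in> {1..d} \<and> x \<in> X (block x)"
  unfolding block_def by (rule someI_ex) blast

lemma block_eq: "j \<in> {1..d} \<Longrightarrow> x \<in> X j \<Longrightarrow> block x = j"
  using block[of x] X_disjoint[of j "block x"] by blast

definition perm :: "nat \<Rightarrow> nat \<Rightarrow> nat" where
  "perm i = (SOME \<pi>. \<pi> permutes {1..d} \<and>
     (\<forall>j\<in>{1..d}. finite (A i \<inter> X j) \<and> card (A i \<inter> X j) \<le> a (\<pi> j)))"

lemma perm:
  assumes "i \<in> {1..h}"
  shows "perm i permutes {1..d} \<and>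
    (\<forall>j\<in>{1..d}. finite (A i \<inter> X j) \<and> card (A i \<inter> X j) \<le> a (perm i j))"
  using someI_ex[OF A_X[OF assms]] unfolding perm_def .

lemma finite_A: "i \<in> {1..h} \<Longrightarrow> finite (A i)"
proof -
  assume i: "i \<in> {1..h}"
  have "A i = (\<Union>j\<in>{1..d}. A i \<inter> X j)" using A_subset[OF i] by blast
  then show ?thesis using perm[OF i] by (metis finite_UN_I finite_atLeastAtMost)
qed

lemma finite_B: "i \<in> {1..h} \<Longrightarrow> finite (B i)"
proof -
  assume i: "i \<in> {1..h}"
  have "B i = (\<Union>j\<in>{1..d}. B i \<inter> X j)" using B_subset[OF i] by blast
  then show ?thesis using B_X[OF i] by (metis finite_UN_I finite_atLeastAtMost)
qed

definition ground :: "'a set" where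
  "ground = (\<Union>i\<in>{1..h}. A i \<union> B i)"

definition label :: "'a \<Rightarrow> real" where
  "label x = real (to_nat_on ground x) + 1"

lemma label_inj: "x \<in> ground \<Longrightarrow> y \<in> ground \<Longrightarrow> label x = label y \<Longrightarrow> x = y"
  using finite_A finite_B by (simp add: label_def ground_def countable_finite)

lemma label_nonzero: "label x \<noteq> 0"
  unfolding label_def by simp

text \<open>The polynomial of \<open>A i\<close> in the variables \<open>y (j, m)\<close>, \<open>j \<in> {1..d}\<close>, \<open>m \<le> b j\<close>, is a product of
  linear forms: \<open>\<Sum>m. label x ^ m * y (block x, m)\<close> for every \<open>x \<in> A i\<close>, and enough copies of
  \<open>y (j, 0)\<close> to make its degree in every block exactly \<open>amax d a\<close>.\<close>

definition padding :: "nat \<Rightarrow> (nat \<times> nat) set" where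
  "padding i = (SIGMA j:{1..d}. {..< amax d a - card (A i \<inter> X j)})"

definition factors :: "nat \<Rightarrow> ('a + nat \<times> nat) set" where
  "factors i = Inl ` A i \<union> Inr ` padding i"

definition factor_block :: "'a + nat \<times> nat \<Rightarrow> nat" where
  "factor_block = case_sum block fst"

definition factor_coeff :: "'a + nat \<times> nat \<Rightarrow> nat \<Rightarrow> real" where
  "factor_coeff = case_sum (\<lambda>x m. label x ^ m) (\<lambda>_ m. if m = 0 then 1 else 0)"

definition linear_form :: "'a + nat \<times> nat \<Rightarrow> (nat \<times> nat \<Rightarrow> real) \<Rightarrow> real" where
  "linear_form q y = (\<Sum>m\<in>{0..b (factor_block q)}. factor_coeff q m * y (factor_block q, m))"

definition F :: "nat \<Rightarrow> (nat \<times> nat \<Rightarrow> real) \<Rightarrow> real" where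
  "F i = (\<lambda>y. \<Prod>q\<in>factors i. linear_form q y)"

text \<open>The point of \<open>B k\<close> carries in block \<open>j\<close> the coefficients of the polynomial vanishing exactly
  at the labels of \<open>B k \<inter> X j\<close>, so a linear form of \<open>x\<close> vanishes there iff \<open>x \<in> B k\<close>.\<close>

definition point :: "nat \<Rightarrow> nat \<times> nat \<Rightarrow> real" where
  "point k = (\<lambda>(j, m). coeff (\<Prod>x\<in>B k \<inter> X j. [:- label x, 1:]) m)"

lemma finite_factors: "i \<in> {1..h} \<Longrightarrow> finite (factors i)"
  unfolding factors_def padding_def using finite_A by auto

lemma linear_form_Inl_point:
  assumes "k \<in> {1..h}" "block x \<in> {1..d}"
  shows "linear_form (Inl x) (point k) = (\<Prod>x'\<in>B k \<inter> X (block x). label x - label x')"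
proof -
  let ?p = "\<Prod>x'\<in>B k \<inter> X (block x). [:- label x', 1:]"
  have "degree ?p \<le> b (block x)"
    using degree_prod_sum_le[of "B k \<inter> X (block x)" "\<lambda>x'. [:- label x', 1:]"] B_X[OF assms]
    by simp
  then have "linear_form (Inl x) (point k) = poly ?p (label x)"
    by (simp add: linear_form_def factor_block_def factor_coeff_def point_def poly_eq_sum_coeff)
  then show ?thesis by (simp add: poly_prod)
qed

lemma linear_form_Inr_point:
  "linear_form (Inr (j, n)) (point k) = (\<Prod>x'\<in>B k \<inter> X j. - label x')"
proof -
  have "linear_form (Inr (j, n)) (point k) = coeff (\<Prod>x'\<in>B k \<inter> X j. [:- label x', 1:]) 0"
    by (simp add: linear_form_def factor_block_def factor_coeff_def point_def sum.atLeast_Suc_atMost)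
  then show ?thesis by (simp add: poly_0_coeff_0[symmetric] poly_prod)
qed

lemma F_point_diag:
  assumes i: "i \<in> {1..h}"
  shows "F i (point i) \<noteq> 0"
proof -
  have "linear_form q (point i) \<noteq> 0" if "q \<in> factors i" for q
  proof (cases q)
    case (Inl x)
    then have x: "x \<in> A i" using that by (auto simp: factors_def)
    have "label x \<noteq> label x'" if "x' \<in> B i" for x'
    proof -
      have "x \<in> ground" "x' \<in> ground" using x that i by (auto simp: ground_def)
      then show ?thesis using label_inj x that A_B_disjoint[OF i] by blast
    qed
    moreover have "block x \<in> {1..d}" using block[of x] A_subset[OF i] x by blast
    ultimately show ?thesis
      using Inl linear_form_Inl_point[OF i] finite_B[OF i] by (simp add: prod_zero_iff)
  next
    case (Inr jn)
    then show ?thesis using label_nonzero linear_form_Inr_point[of "fst jn" "snd jn" i]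
      by (cases jn) (auto simp: prod_zero_iff finite_B[OF i])
  qed
  then show ?thesis unfolding F_def using finite_factors[OF i] by (simp add: prod_zero_iff)
qed

lemma F_point_upper:
  assumes "1 \<le> i" "i < k" "k \<le> h"
  shows "F i (point k) = 0"
proof -
  obtain x where x: "x \<in> A i" "x \<in> B k" using A_B_cross[OF assms] by blast
  have i: "i \<in> {1..h}" and k: "k \<in> {1..h}" using assms by auto
  have bx: "block x \<in> {1..d}" "x \<in> X (block x)" using block[of x] A_subset[OF i] x by blast+
  have "linear_form (Inl x) (point k) = 0"
    using linear_form_Inl_point[OF k bx(1)] x bx finite_B[OF k] by (auto simp: prod_zero_iff)
  moreover have "Inl x \<in> factors i" using x by (simp add: factors_def)
  ultimately show ?thesis unfolding F_def using finite_factors[OF i] by (auto simp: prod_zero_iff)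
qed

lemma factor_block_range:
  assumes i: "i \<in> {1..h}" and q: "q \<in> factors i"
  shows "factor_block q \<in> {1..d}"
proof (cases q)
  case (Inl x)
  then have "x \<in> (\<Union>j\<in>{1..d}. X j)" using q A_subset[OF i] by (auto simp: factors_def)
  then show ?thesis using Inl block[of x] by (simp add: factor_block_def)
qed (use q in \<open>auto simp: factors_def padding_def factor_block_def\<close>)

lemma factors_in_block:
  assumes i: "i \<in> {1..h}" and j: "j \<in> {1..d}"
  shows "{q\<in>factors i. factor_block q = j}
    = Inl ` (A i \<inter> X j) \<union> Inr ` ({j} \<times> {..< amax d a - card (A i \<inter> X j)})"
proof (intro equalityI subsetI)
  fix q assume q: "q \<in> {q\<in>factors i. factor_block q = j}"
  show "q \<in> Inl ` (A i \<inter> X j) \<union> Inr ` ({j} \<times> {..< amax d a - card (A i \<inter> X j)})"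
  proof (cases q)
    case (Inl x)
    then have "x \<in> A i" "block x = j" using q by (auto simp: factors_def factor_block_def)
    moreover from this have "x \<in> X j" using block[of x] A_subset[OF i] by blast
    ultimately show ?thesis using Inl by blast
  next
    case (Inr jn)
    then show ?thesis using q by (auto simp: factors_def padding_def factor_block_def)
  qed
next
  fix q assume "q \<in> Inl ` (A i \<inter> X j) \<union> Inr ` ({j} \<times> {..< amax d a - card (A i \<inter> X j)})"
  then show "q \<in> {q\<in>factors i. factor_block q = j}"
    using block_eq[OF j] j by (auto simp: factors_def padding_def factor_block_def)
qed

lemma card_A_X_le:
  assumes "i \<in> {1..h}" "j \<in> {1..d}"
  shows "card (A i \<inter> X j) \<le> a (perm i j)" and "a (perm i j) \<le> amax d a"
proof -
  show "card (A i \<inter> X j) \<le> a (perm i j)" using perm[OF assms(1)] assms(2) by blast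
  have "perm i permutes {1..d}" using perm[OF assms(1)] by blast
  then have "perm i j \<in> {1..d}" using assms(2) by (simp only: permutes_in_image)
  then show "a (perm i j) \<le> amax d a" by (rule le_amax)
qed

lemma card_factors_in_block:
  assumes "i \<in> {1..h}" "j \<in> {1..d}"
  shows "card {q\<in>factors i. factor_block q = j} = amax d a"
proof -
  let ?r = "amax d a - card (A i \<inter> X j)"
  have "card {q\<in>factors i. factor_block q = j}
      = card (Inl ` (A i \<inter> X j) :: ('a + nat \<times> nat) set) + card (Inr ` ({j} \<times> {..<?r}) :: ('a + nat \<times> nat) set)"
    unfolding factors_in_block[OF assms] by (rule card_Un_disjoint) (use finite_A[OF assms(1)] in auto)
  also have "\<dots> = card (A i \<inter> X j) + ?r" by (simp add: card_image card_cartesian_product)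
  finally show ?thesis using card_A_X_le[OF assms] by simp
qed

lemma choice_exponent_admissible:
  assumes i: "i \<in> {1..h}" and g: "g \<in> Pi\<^sub>E (factors i) (\<lambda>q. {0..b (factor_block q)})"
    and nonzero: "\<forall>q\<in>factors i. factor_coeff q (g q) \<noteq> 0"
  shows "choice_exponent (factors i) factor_block g \<in> admissible_exponents d a b"
proof -
  let ?e = "choice_exponent (factors i) factor_block g"
  have support: "?e v = 0" if "v \<notin> Sigma {1..d} (\<lambda>j. {0..b j})" for v
  proof -
    have none: "{q\<in>factors i. (factor_block q, g q) = v} = {}"
      using that g factor_block_range[OF i] by (auto simp: PiE_iff)
    show ?thesis by (simp only: choice_exponent_def none card.empty)
  qed
  have degree: "(\<Sum>m\<in>{0..b j}. ?e (j, m)) = amax d a" if "j \<in> {1..d}" for j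
    using sum_choice_exponent[where n = b and \<beta> = factor_block, OF finite_factors[OF i] g] card_factors_in_block[OF i that] by simp
  have slack: "amax d a \<le> a (perm i j) + ?e (j, 0)" if j: "j \<in> {1..d}" for j
  proof -
    let ?pad = "Inr ` ({j} \<times> {..< amax d a - card (A i \<inter> X j)}) :: ('a + nat \<times> nat) set"
    have pad: "?pad \<subseteq> {q\<in>factors i. factor_block q = j}" using factors_in_block[OF i j] by blast
    \<comment> \<open>the only nonzero coefficient of a padding form is that of \<open>y (j, 0)\<close>\<close>
    have "?pad \<subseteq> {q\<in>factors i. (factor_block q, g q) = (j, 0)}"
    proof
      fix q assume q: "q \<in> ?pad"
      then have "q \<in> factors i" "factor_block q = j" using pad by auto
      moreover have "g q = 0"
      proof -
        obtain n where "q = Inr (j, n)" using q by blast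
        moreover have "factor_coeff q (g q) \<noteq> 0" using nonzero \<open>q \<in> factors i\<close> by blast
        ultimately show ?thesis by (simp add: factor_coeff_def split: if_splits)
      qed
      ultimately show "q \<in> {q\<in>factors i. (factor_block q, g q) = (j, 0)}" by simp
    qed
    then have "card ?pad \<le> ?e (j, 0)"
      unfolding choice_exponent_def by (rule card_mono[rotated]) (use finite_factors[OF i] in auto)
    then show ?thesis using card_A_X_le[OF i j] by (simp add: card_image card_cartesian_product)
  qed
  have "perm i permutes {1..d}" using perm[OF i] by blast
  moreover have "\<forall>v. v \<notin> Sigma {1..d} (\<lambda>j. {0..b j}) \<longrightarrow> ?e v = 0" using support by blast
  moreover have "\<forall>j\<in>{1..d}. (\<Sum>m\<in>{0..b j}. ?e (j, m)) = amax d a \<and> amax d a \<le> a (perm i j) + ?e (j, 0)"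
    using degree slack by blast
  ultimately show ?thesis unfolding admissible_exponents_def mem_Collect_eq by blast
qed

lemma F_in_span:
  assumes "i \<in> {1..h}"
  shows "F i \<in> fun_space.span (monomial (Sigma {1..d} (\<lambda>j. {0..b j})) ` admissible_exponents d a b)"
  unfolding F_def linear_form_def
proof (rule prod_linear_forms_in_span[where n = b and \<beta> = factor_block and c = factor_coeff])
  show "\<And>q m. q \<in> factors i \<Longrightarrow> m \<le> b (factor_block q) \<Longrightarrow> (factor_block q, m) \<in> Sigma {1..d} (\<lambda>j. {0..b j})"
    using factor_block_range[OF assms] by simp
  show "finite (factors i)" by (rule finite_factors[OF assms])
  show "\<And>g. g \<in> Pi\<^sub>E (factors i) (\<lambda>q. {0..b (factor_block q)}) \<Longrightarrow>
      \<forall>q\<in>factors i. factor_coeff q (g q) \<noteq> 0 \<Longrightarrow>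
      choice_exponent (factors i) factor_block g \<in> admissible_exponents d a b"
    by (rule choice_exponent_admissible[OF assms])
qed simp

theorem card_le_Qbound: "h \<le> Qbound d a b"
proof -
  let ?M = "monomial (Sigma {1..d} (\<lambda>j. {0..b j})) ` admissible_exponents d a b
    :: ((nat \<times> nat \<Rightarrow> real) \<Rightarrow> real) set"
  have fin: "finite (admissible_exponents d a b)"
    and card: "card (admissible_exponents d a b) \<le> Qbound d a b"
    using card_admissible_exponents_le_Qbound by auto
  have "h = card {1..h}" by simp
  also have "\<dots> \<le> card ?M"
  proof (rule card_le_card_span_if_triangular[where F = F and P = point])
    show "F ` {1..h} \<subseteq> fun_space.span ?M" using F_in_span by blast
    show "\<And>i k. i \<in> {1..h} \<Longrightarrow> k \<in> {1..h} \<Longrightarrow> i < k \<Longrightarrow> F i (point k) = 0"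
      using F_point_upper by simp
  qed (use fin F_point_diag in simp_all)
  also have "\<dots> \<le> card (admissible_exponents d a b)" by (rule card_image_le[OF fin])
  finally show ?thesis using card by simp
qed

end

section \<open>Sharpness\<close>

lemma sum_less_sum_if_exceeds:
  fixes S T :: "nat set"
  assumes "finite S" "finite T" "card S = card T" "S \<noteq> T"
    and S_le: "\<And>x. x \<in> S \<Longrightarrow> x \<le> N" and T_gt: "\<And>x. x \<in> T - S \<Longrightarrow> N < x"
  shows "\<Sum>S < \<Sum>T"
proof -
  have card_diff: "card (T - S) = card (S - T)"
    using card_Int_Diff[OF \<open>finite S\<close>, of T] card_Int_Diff[OF \<open>finite T\<close>, of S] \<open>card S = card T\<close>
    by (simp add: Int_commute)
  have "S - T \<noteq> {}"
    using \<open>card S = card T\<close> \<open>S \<noteq> T\<close> \<open>finite T\<close> by (metis Diff_eq_empty_iff card_subset_eq)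
  then have "card (S - T) > 0" using \<open>finite S\<close> by (simp add: card_gt_0_iff)
  then have "\<Sum>(S - T) < card (S - T) * Suc N"
    using S_le by (intro sum_bounded_above_strict[of "S - T" id, simplified]) (auto simp: less_Suc_eq_le)
  also have "\<dots> \<le> \<Sum>(T - S)"
    using sum_bounded_below[of "T - S" "Suc N" id] T_gt card_diff by (simp add: Suc_le_eq)
  finally have "\<Sum>(S - T) < \<Sum>(T - S)" .
  moreover have "\<Sum>S = \<Sum>(S \<inter> T) + \<Sum>(S - T)" "\<Sum>T = \<Sum>(S \<inter> T) + \<Sum>(T - S)"
    using sum.Int_Diff[OF \<open>finite S\<close>, of id T] sum.Int_Diff[OF \<open>finite T\<close>, of id S]
    by (simp_all add: Int_commute)
  ultimately show ?thesis by simp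
qed

lemma obtain_antitone_enumeration:
  fixes f :: "'a \<Rightarrow> 'b::linorder"
  assumes "finite S"
  obtains g where "bij_betw g {1..card S} S"
    and "\<And>i k. 1 \<le> i \<Longrightarrow> i < k \<Longrightarrow> k \<le> card S \<Longrightarrow> f (g k) \<le> f (g i)"
proof -
  obtain xs where xs: "distinct xs" "set xs = S" using finite_distinct_list[OF assms] by blast
  define ys where "ys = sort_key f xs"
  have ys: "distinct ys" "set ys = S" "sorted (map f ys)" "length ys = card S"
    using xs by (auto simp: ys_def distinct_card[symmetric])
  show thesis
  proof (rule that[of "\<lambda>i. ys ! (card S - i)"])
    have "bij_betw (\<lambda>i. card S - i) {1..card S} {..<length ys}"
      by (rule bij_betw_byWitness[where f' = "\<lambda>i. card S - i"]) (use ys(4) in auto)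
    then show "bij_betw (\<lambda>i. ys ! (card S - i)) {1..card S} S"
      using bij_betw_nth[OF ys(1) refl ys(2)[symmetric]] by (auto dest: bij_betw_trans simp: comp_def)
    fix i k assume "1 \<le> i" "i < k" "k \<le> card S"
    then have "map f ys ! (card S - k) \<le> map f ys ! (card S - i)"
      using ys by (intro sorted_nth_mono) auto
    then show "f (ys ! (card S - k)) \<le> f (ys ! (card S - i))"
      using \<open>1 \<le> i\<close> \<open>i < k\<close> \<open>k \<le> card S\<close> ys(4) by simp
  qed
qed

definition Qperm :: "nat \<Rightarrow> (nat \<Rightarrow> nat) \<Rightarrow> (nat \<Rightarrow> nat) \<Rightarrow> (nat \<times> nat) set \<Rightarrow> nat \<Rightarrow> nat" where
  "Qperm d a b S = (SOME \<pi>. \<pi> permutes {1..d} \<and>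
     (\<forall>i\<in>{1..d}. slice S i \<subseteq> {1..a (\<pi> i) + b i} \<and> card (slice S i) = b i))"

lemma Qperm:
  assumes "S \<in> Qsets d a b"
  shows "Qperm d a b S permutes {1..d} \<and> (\<forall>i\<in>{1..d}.
    slice S i \<subseteq> {1..a (Qperm d a b S i) + b i} \<and> card (slice S i) = b i)"
proof -
  have "\<exists>\<pi>. \<pi> permutes {1..d} \<and>
      (\<forall>i\<in>{1..d}. slice S i \<subseteq> {1..a (\<pi> i) + b i} \<and> card (slice S i) = b i)"
    using assms unfolding Qsets_def by blast
  from someI_ex[OF this] show ?thesis unfolding Qperm_def .
qed

definition Qcomplement :: "nat \<Rightarrow> (nat \<Rightarrow> nat) \<Rightarrow> (nat \<Rightarrow> nat) \<Rightarrow> (nat \<times> nat) set \<Rightarrow> (nat \<times> nat) set" where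
  "Qcomplement d a b S = {(j, k). j \<in> {1..d} \<and> k \<in> {1..a (Qperm d a b S j) + b j} \<and> (j, k) \<notin> S}"

definition slice_weight :: "nat \<Rightarrow> (nat \<times> nat) set \<Rightarrow> nat" where
  "slice_weight d S = (\<Sum>j\<in>{1..d}. \<Sum>(slice S j))"

lemma finite_slice:
  assumes "S \<in> Qsets d a b"
  shows "finite (slice S j)"
proof -
  have "slice S j \<subseteq> {1..amax d a + b j}" using assms by (auto simp: Qsets_def Ucal_def)
  then show ?thesis by (rule finite_subset) simp
qed

lemma slice_weight_less:
  assumes S: "S \<in> Qsets d a b" and T: "T \<in> Qsets d a b" and "S \<noteq> T"
    and disjoint: "Qcomplement d a b S \<inter> T = {}"
  shows "slice_weight d S < slice_weight d T"
proof -
  have less: "\<Sum>(slice S j) < \<Sum>(slice T j)" if j: "j \<in> {1..d}" "slice S j \<noteq> slice T j" for j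
  proof (rule sum_less_sum_if_exceeds[where N = "a (Qperm d a b S j) + b j"])
    show "finite (slice S j)" "finite (slice T j)" using finite_slice S T by blast+
    show "card (slice S j) = card (slice T j)" using Qperm[OF S] Qperm[OF T] j by simp
    show "x \<le> a (Qperm d a b S j) + b j" if "x \<in> slice S j" for x
    proof -
      have "slice S j \<subseteq> {1..a (Qperm d a b S j) + b j}" using Qperm[OF S] j(1) by blast
      then show ?thesis using that by auto
    qed
    show "a (Qperm d a b S j) + b j < x" if "x \<in> slice T j - slice S j" for x
    proof -
      have "1 \<le> x" using T that unfolding Qsets_def Ucal_def by auto
      then show ?thesis using disjoint that j unfolding Qcomplement_def by auto
    qed
  qed (use j in simp)
  have "\<exists>j\<in>{1..d}. slice S j \<noteq> slice T j"
  proof (rule ccontr)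
    assume "\<not> ?thesis"
    then have "S = T" using S T unfolding Qsets_def Ucal_def by fast
    then show False using \<open>S \<noteq> T\<close> by simp
  qed
  then have "\<exists>j\<in>{1..d}. \<Sum>(slice S j) < \<Sum>(slice T j)" using less by blast
  moreover have "\<forall>j\<in>{1..d}. \<Sum>(slice S j) \<le> \<Sum>(slice T j)"
    using less by (metis order.order_iff_strict)
  ultimately show ?thesis unfolding slice_weight_def by (intro sum_strict_mono_ex1) simp_all
qed

lemma Qcomplement_slice:
  assumes "S \<in> Qsets d a b" "j \<in> {1..d}"
  shows "finite (slice (Qcomplement d a b S) j)"
    and "card (slice (Qcomplement d a b S) j) = a (Qperm d a b S j)"
proof -
  have eq: "slice (Qcomplement d a b S) j = {1..a (Qperm d a b S j) + b j} - slice S j"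
    using assms(2) by (auto simp: Qcomplement_def)
  then show "finite (slice (Qcomplement d a b S) j)" by simp
  have "slice S j \<subseteq> {1..a (Qperm d a b S j) + b j}" "card (slice S j) = b j"
    using Qperm[OF assms(1)] assms(2) by blast+
  then show "card (slice (Qcomplement d a b S) j) = a (Qperm d a b S j)"
    unfolding eq by (simp add: card_Diff_subset finite_slice[OF assms(1)])
qed

lemma slice_eq_Int_fst: "S \<inter> {p. fst p = j} = Pair j ` slice S j"
  by auto

lemma exists_multi_two_families_Qbound:
  "\<exists>(X :: nat \<Rightarrow> (nat \<times> nat) set) A B. multi_two_families d a b X (Qbound d a b) A B"
proof -
  let ?h = "Qbound d a b"
  obtain g where g: "bij_betw g {1..?h} (Qsets d a b)"
    and heavier_first: "\<And>i k. 1 \<le> i \<Longrightarrow> i < k \<Longrightarrow> k \<le> ?h \<Longrightarrow> slice_weight d (g k) \<le> slice_weight d (g i)"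
    using obtain_antitone_enumeration[OF finite_Qsets, where f = "slice_weight d"]
    unfolding Qbound_eq_card_Qsets by blast
  have gQ: "g i \<in> Qsets d a b" if "i \<in> {1..?h}" for i using bij_betw_apply[OF g that] .
  define X :: "nat \<Rightarrow> (nat \<times> nat) set" where "X j = {p. fst p = j}" for j
  define A where "A i = Qcomplement d a b (g i)" for i
  have "multi_two_families d a b X ?h A g"
    unfolding multi_two_families_def
  proof (intro conjI ballI allI impI)
    show "X j \<inter> X k = {}" if "j \<noteq> k" for j k using that by (auto simp: X_def)
    show "A i \<subseteq> (\<Union>j\<in>{1..d}. X j)" for i by (auto simp: A_def Qcomplement_def X_def)
    show "g i \<subseteq> (\<Union>j\<in>{1..d}. X j)" if "i \<in> {1..?h}" for i
      using gQ[OF that] by (auto simp: Qsets_def Ucal_def X_def)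
    show "A i \<inter> g i = {}" for i by (auto simp: A_def Qcomplement_def)
    show "A i \<inter> g k \<noteq> {}" if "1 \<le> i \<and> i < k \<and> k \<le> ?h" for i k
    proof
      assume "A i \<inter> g k = {}"
      moreover have "g i \<noteq> g k" using bij_betw_imp_inj_on[OF g] that by (auto dest: inj_onD)
      ultimately have "slice_weight d (g i) < slice_weight d (g k)"
        using that gQ[of i] gQ[of k] by (intro slice_weight_less) (auto simp: A_def)
      then show False using heavier_first[of i k] that by simp
    qed
    fix i j assume i: "i \<in> {1..?h}" and j: "j \<in> {1..d}"
    show "finite (g i \<inter> X j)" "card (g i \<inter> X j) \<le> b j"
      using Qperm[OF gQ[OF i]] j finite_slice[OF gQ[OF i]]
      by (simp_all add: X_def slice_eq_Int_fst card_image inj_on_def)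
  next
    fix i assume i: "i \<in> {1..?h}"
    show "\<exists>\<pi>. \<pi> permutes {1..d} \<and> (\<forall>j\<in>{1..d}. finite (A i \<inter> X j) \<and> card (A i \<inter> X j) \<le> a (\<pi> j))"
      using Qperm[OF gQ[OF i]] Qcomplement_slice[OF gQ[OF i]]
      by (intro exI[of _ "Qperm d a b (g i)"]) (simp add: A_def X_def slice_eq_Int_fst card_image inj_on_def)
  qed
  then show ?thesis by blast
qed

theorem theorem1:
  fixes d :: nat and a b :: "nat \<Rightarrow> nat"
  shows "(\<forall>(X :: nat \<Rightarrow> 'a set) h A B. multi_two_families d a b X h A B \<longrightarrow> h \<le> Qbound d a b)
     \<and> (\<exists>(X :: nat \<Rightarrow> (nat \<times> nat) set) A B. multi_two_families d a b X (Qbound d a b) A B)"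
  using two_families.card_le_Qbound[unfolded two_families_def] exists_multi_two_families_Qbound by blast

end
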